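(* Let $\mathrm{FiF}$ and $\mathrm{OFF}$ be as in the context, serving $q_1,\dots,q_T$ with cache size $k$. For $1\le t\le T$ let $\mathrm{Bel}_t,\mathrm{Off}_t\in\{0,1\}$ be the number of pages fetched by $\mathrm{FiF}$ and by $\mathrm{OFF}$, respectively, when serving $q_t$. Then for every $1\le t\le T$, $$\mathrm{Bel}_t+\Phi(t+1)-\Phi(t)\le \mathrm{Off}_t,$$ and $\Phi(t)\ge 0$ for all $t$. Consequently the total number of fetches of $\mathrm{FiF}$ is at most that of $\mathrm{OFF}$ plus $\Phi(1)$.
   Context: Unweighted paging with a universe $U$ of $n$ pages, cache size $k<n$, and request sequence $q_1,\dots,q_T$. Fix a total order on $U$. For $1\le t\le T+1$, $\mathrm{rank}(\cdot,t)$ is the bijection $U\to\{1,\dots,n\}$ obtained by ordering pages increasingly by the time of their next request in $\{t,\dots,T\}$, with pages not requested in $\{t,\dots,T\}$ placed last, in the fixed order (so $\mathrm{rank}(q_t,t)=1$). $\mathrm{FiF}$ always holds exactly $k$ pages; on a request $q_t$ not in its cache it loads $q_t$ and evicts the page of its cache with the largest $\mathrm{rank}(\cdot,t)$. $\mathrm{OFF}$ is an arbitrary algorithm always holding exactly $k$ pages and containing $q_t$ after serving it. Let $C(t)$, $C^*(t)$ be the caches of $\mathrm{FiF}$ and $\mathrm{OFF}$ just before request $q_t$ is served (for $t=T+1$: after serving $q_T$). Let $n(s,t)=|\{p\in C(t):\mathrm{rank}(p,t)\ge s\}|$, $n^*(s,t)=|\{p\in C^*(t):\mathrm{rank}(p,t)\ge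 s\}|$, and $\Phi(t)=\max_{1\le s\le n}\big(n(s,t)-n^*(s,t)\big)$. *)

theory Defs
  imports Main "HOL-Library.Cardinality"
begin

text \<open>Pages form a finite linearly ordered type 'a (the universe U, n = CARD('a));
  the linear order of 'a is the fixed total order on U. Requests are q 1, ..., q T.\<close>

definition next_req :: "(nat \<Rightarrow> 'a) \<Rightarrow> nat \<Rightarrow> 'a \<Rightarrow> nat \<Rightarrow> nat" where
  "next_req q T p t =
     (if \<exists>s. t \<le> s \<and> s \<le> T \<and> q s = p
      then (LEAST s. t \<le> s \<and> s \<le> T \<and> q s = p) else T + 1)"

text \<open>rank(p,t): position (1-based) of p when pages are ordered by the time of their next
  request in {t..T}; pages not requested there come last, ordered by the fixed order.\<close>
definition rank :: "(nat \<Rightarrow> 'a::{finite,linorder}) \<Rightarrow> nat \<Rightarrow> 'a \<Rightarrow> nat \<Rightarrow> nat" where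
  "rank q T p t = card {p'. next_req q T p' t < next_req q T p t
                        \<or> (next_req q T p' t = next_req q T p t \<and> p' < p)} + 1"

definition ncount :: "(nat \<Rightarrow> 'a::{finite,linorder}) \<Rightarrow> nat \<Rightarrow> 'a set \<Rightarrow> nat \<Rightarrow> nat \<Rightarrow> nat" where
  "ncount q T A s t = card {p \<in> A. s \<le> rank q T p t}"

definition Phi :: "(nat \<Rightarrow> 'a::{finite,linorder}) \<Rightarrow> nat \<Rightarrow> (nat \<Rightarrow> 'a set) \<Rightarrow> (nat \<Rightarrow> 'a set) \<Rightarrow> nat \<Rightarrow> int" where
  "Phi q T C Cs t = Max ((\<lambda>s. int (ncount q T (C t) s t) - int (ncount q T (Cs t) s t)) ` {1..CARD('a)})"

text \<open>C t is the cache of FiF just before request t (C (T+1): after serving q T).\<close>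
definition is_FiF :: "nat \<Rightarrow> (nat \<Rightarrow> 'a::{finite,linorder}) \<Rightarrow> nat \<Rightarrow> (nat \<Rightarrow> 'a set) \<Rightarrow> bool" where
  "is_FiF k q T C \<longleftrightarrow>
     (\<forall>t\<in>{1..T+1}. card (C t) = k) \<and>
     (\<forall>t\<in>{1..T}. C (t + 1) =
        (if q t \<in> C t then C t
         else insert (q t) (C t - {ARG_MAX (\<lambda>p. rank q T p t) p. p \<in> C t})))"

text \<open>Cs t is the cache of an arbitrary algorithm OFF just before request t.\<close>
definition is_OFF :: "nat \<Rightarrow> (nat \<Rightarrow> 'a) \<Rightarrow> nat \<Rightarrow> (nat \<Rightarrow> 'a set) \<Rightarrow> bool" where
  "is_OFF k q T Cs \<longleftrightarrow>
     (\<forall>t\<in>{1..T+1}. card (Cs t) = k) \<and> (\<forall>t\<in>{1..T}. q t \<in> Cs (t + 1))"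

definition fetched :: "(nat \<Rightarrow> 'a set) \<Rightarrow> nat \<Rightarrow> nat" where
  "fetched C t = card (C (t + 1) - C t)"

end

theory Submission imports Defs begin

text \<open>Compare the caches by the counting functions
  \<open>s \<mapsto> n(s,t)\<close> and \<open>s \<mapsto> n\<^sup>*(s,t)\<close>; \<open>\<Phi>\<close> is their largest excess, which is
  nonnegative since both caches have \<open>k\<close> pages (take \<open>s = 1\<close>). Advancing time from
  \<open>t\<close> to \<open>t + 1\<close> only re-inserts the just requested page at some rank \<open>r\<close> and shifts
  the ranks \<open>2..r\<close> down by one, simultaneously in both caches, so it cannot raise \<open>\<Phi>\<close>.
  A change of OFF's cache by \<open>Off\<^sub>t\<close> pages raises \<open>\<Phi>\<close> by at most \<open>Off\<^sub>t\<close>. On a miss of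
  FiF, OFF already holds the requested page, which gives \<open>\<Phi> \<ge> 1\<close> at threshold \<open>s = 2\<close>;
  evicting the page of largest rank then lowers every positive excess by one.\<close>

definition precedes :: "(nat \<Rightarrow> 'a::linorder) \<Rightarrow> nat \<Rightarrow> nat \<Rightarrow> 'a \<Rightarrow> 'a \<Rightarrow> bool" where
  "precedes q T t a b \<longleftrightarrow>
     next_req q T a t < next_req q T b t \<or> (next_req q T a t = next_req q T b t \<and> a < b)"

lemma rank_eq_card_precedes: "rank q T p t = card {p'. precedes q T t p' p} + 1"
  unfolding rank_def precedes_def by simp

lemma precedes_trans: "precedes q T t a b \<Longrightarrow> precedes q T t b c \<Longrightarrow> precedes q T t a c"
  unfolding precedes_def by auto

lemma precedes_irrefl: "\<not> precedes q T t a a"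
  unfolding precedes_def by auto

lemma precedes_total: "a \<noteq> b \<Longrightarrow> precedes q T t a b \<or> precedes q T t b a"
  unfolding precedes_def by (metis linorder_neqE_nat neq_iff)

lemma rank_strict_mono:
  fixes q :: "nat \<Rightarrow> 'a::{finite,linorder}"
  assumes "precedes q T t a b"
  shows "rank q T a t < rank q T b t"
proof -
  have "{p'. precedes q T t p' a} \<subset> {p'. precedes q T t p' b}"
    using assms precedes_trans[of q T t _ a b] precedes_irrefl[of q T t a] by blast
  then show ?thesis
    by (simp add: rank_eq_card_precedes psubset_card_mono)
qed

lemma rank_ge_1: "rank q T p t \<ge> 1"
  by (simp add: rank_eq_card_precedes)

lemma rank_le_card_UNIV:
  fixes q :: "nat \<Rightarrow> 'a::{finite,linorder}"
  shows "rank q T p t \<le> CARD('a)"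
proof -
  have "{p'. precedes q T t p' p} \<subseteq> UNIV - {p}"
    using precedes_irrefl by blast
  then have "card {p'. precedes q T t p' p} \<le> CARD('a) - 1"
    by (metis card_Diff_singleton card_mono finite iso_tuple_UNIV_I)
  moreover have "CARD('a) > 0" by simp
  ultimately show ?thesis
    unfolding rank_eq_card_precedes by linarith
qed

lemma next_req_ge: "t \<le> T \<Longrightarrow> t \<le> next_req q T p t"
  unfolding next_req_def by (auto intro: LeastI2_ex)

lemma next_req_request: "t \<le> T \<Longrightarrow> next_req q T (q t) t = t"
  unfolding next_req_def by (auto intro!: Least_equality)

lemma next_req_eq_self_imp_request:
  assumes "t \<le> T" "next_req q T p t = t"
  shows "q t = p"
proof (cases "\<exists>s. t \<le> s \<and> s \<le> T \<and> q s = p")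
  case True
  then have "q (LEAST s. t \<le> s \<and> s \<le> T \<and> q s = p) = p"
    by (rule LeastI2_ex) auto
  then show ?thesis
    using assms True unfolding next_req_def by simp
next
  case False
  then have "next_req q T p t = T + 1"
    unfolding next_req_def by (simp only: if_False)
  then show ?thesis
    using assms by simp
qed

lemma next_req_Suc_other:
  assumes "t \<le> T" "p \<noteq> q t"
  shows "next_req q T p (t + 1) = next_req q T p t"
proof -
  have "(\<lambda>s. t + 1 \<le> s \<and> s \<le> T \<and> q s = p) = (\<lambda>s. t \<le> s \<and> s \<le> T \<and> q s = p)"
    using assms by (auto simp: fun_eq_iff) (metis le_antisym not_less_eq_eq)
  then show ?thesis
    unfolding next_req_def by (simp only: Suc_eq_plus1)
qed

lemma request_precedes_other:
  assumes "t \<le> T" "p \<noteq> q t"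
  shows "precedes q T t (q t) p"
proof -
  have "next_req q T p t \<noteq> t"
    using next_req_eq_self_imp_request[OF assms(1)] assms(2) by metis
  then show ?thesis
    unfolding precedes_def using next_req_ge[OF assms(1)] next_req_request[OF assms(1)]
    by (metis le_neq_implies_less)
qed

lemma rank_request: "t \<le> T \<Longrightarrow> rank q T (q t) t = 1"
  unfolding rank_eq_card_precedes
  using request_precedes_other precedes_trans precedes_irrefl
  by (metis (no_types, lifting) Collect_empty_eq card.empty add_0)

lemma rank_other_ge_2:
  fixes q :: "nat \<Rightarrow> 'a::{finite,linorder}"
  assumes "t \<le> T" "p \<noteq> q t"
  shows "2 \<le> rank q T p t"
  using rank_strict_mono[OF request_precedes_other[where q=q, OF assms]] rank_request[of t T q] assms(1)
  by simp

lemma rank_Suc_other: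
  fixes q :: "nat \<Rightarrow> 'a::{finite,linorder}"
  assumes "t \<le> T" "p \<noteq> q t"
  shows "rank q T p (t + 1) = rank q T p t - 1 + (if precedes q T (t + 1) (q t) p then 1 else 0)"
proof -
  let ?S = "{x. precedes q T t x p}"
  have "precedes q T (t + 1) x p \<longleftrightarrow> precedes q T t x p" if "x \<noteq> q t" for x
    using next_req_Suc_other[where q=q, OF assms(1) that] next_req_Suc_other[where q=q, OF assms]
    unfolding precedes_def by simp
  then have "{x. precedes q T (t + 1) x p}
      = (?S - {q t}) \<union> (if precedes q T (t + 1) (q t) p then {q t} else {})"
    by (intro set_eqI, case_tac "x = q t") auto
  moreover have "q t \<in> ?S"
    using request_precedes_other[where q=q, OF assms] by simp
  moreover from this have "1 \<le> card ?S"
    using card_0_eq[of ?S] by fastforce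
  ultimately show ?thesis
    by (simp add: rank_eq_card_precedes card_Diff_singleton insert_absorb)
qed

lemma threshold_rank_Suc_other:
  fixes q :: "nat \<Rightarrow> 'a::{finite,linorder}"
  assumes "t \<le> T" "p \<noteq> q t" "1 \<le> s"
  shows "s \<le> rank q T p (t + 1) \<longleftrightarrow>
    (if s \<le> rank q T (q t) (t + 1) then s + 1 \<le> rank q T p t else s \<le> rank q T p t)"
proof (cases "precedes q T (t + 1) (q t) p")
  case True
  then have "rank q T (q t) (t + 1) < rank q T p (t + 1)"
    by (rule rank_strict_mono)
  then show ?thesis
    using rank_Suc_other[where q=q, OF assms(1,2)] rank_other_ge_2[where q=q, OF assms(1,2)] True by auto
next
  case False
  then have "precedes q T (t + 1) p (q t)"
    using precedes_total assms(2) by metis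
  then have "rank q T p (t + 1) < rank q T (q t) (t + 1)"
    by (rule rank_strict_mono)
  then show ?thesis
    using rank_Suc_other[where q=q, OF assms(1,2)] rank_other_ge_2[where q=q, OF assms(1,2)] False by auto
qed

lemma ncount_Suc:
  fixes q :: "nat \<Rightarrow> 'a::{finite,linorder}"
  assumes "t \<le> T" "q t \<in> A" "1 \<le> s"
  shows "ncount q T A s (t + 1) =
    (if s \<le> rank q T (q t) (t + 1) then ncount q T A (s + 1) t + 1 else ncount q T A s t)"
proof -
  define r where "r = rank q T (q t) (t + 1)"
  define s' where "s' = (if s \<le> r then s + 1 else s)"
  have "1 \<le> r"
    unfolding r_def by (rule rank_ge_1)
  then have "2 \<le> s'"
    using assms(3) unfolding s'_def by simp
  then have q_out: "q t \<notin> {p \<in> A. s' \<le> rank q T p t}"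
    using rank_request[where q=q, OF assms(1)] by simp
  have "p \<in> {p \<in> A. s \<le> rank q T p (t + 1)} \<longleftrightarrow>
      p \<in> {p \<in> A. s' \<le> rank q T p t} \<union> (if s \<le> r then {q t} else {})" for p
  proof (cases "p = q t")
    case True
    then show ?thesis
      using q_out assms(2) unfolding r_def by simp
  next
    case False
    then show ?thesis
      using threshold_rank_Suc_other[where q=q, OF assms(1) False assms(3)]
      unfolding s'_def r_def by simp
  qed
  then have "{p \<in> A. s \<le> rank q T p (t + 1)}
      = {p \<in> A. s' \<le> rank q T p t} \<union> (if s \<le> r then {q t} else {})"
    by blast
  then show ?thesis
    using q_out unfolding ncount_def s'_def r_def[symmetric]
    by (cases "s \<le> r") simp_all
qed

definition potential :: "(nat \<Rightarrow> 'a::{finite,linorder}) \<Rightarrow> nat \<Rightarrow> 'a set \<Rightarrow> 'a set \<Rightarrow> nat \<Rightarrow> int" where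
  "potential q T A B t =
     Max ((\<lambda>s. int (ncount q T A s t) - int (ncount q T B s t)) ` {1..CARD('a)})"

lemma Phi_eq_potential: "Phi q T C Cs t = potential q T (C t) (Cs t) t"
  unfolding Phi_def potential_def ..

lemma excess_le_potential:
  fixes q :: "nat \<Rightarrow> 'a::{finite,linorder}"
  assumes "s \<in> {1..CARD('a)}"
  shows "int (ncount q T A s t) - int (ncount q T B s t) \<le> potential q T A B t"
  unfolding potential_def using assms by (intro Max_ge) auto

lemma potential_leI:
  fixes q :: "nat \<Rightarrow> 'a::{finite,linorder}"
  assumes "\<And>s. s \<in> {1..CARD('a)} \<Longrightarrow> int (ncount q T A s t) - int (ncount q T B s t) \<le> x"
  shows "potential q T A B t \<le> x"
  unfolding potential_def using assms by (subst Max_le_iff) auto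

lemma ncount_1: "ncount q T A 1 t = card A"
  unfolding ncount_def using rank_ge_1[of q T _ t] by simp

lemma ncount_beyond_card_UNIV:
  fixes q :: "nat \<Rightarrow> 'a::{finite,linorder}"
  shows "ncount q T A (CARD('a) + 1) t = 0"
  unfolding ncount_def using rank_le_card_UNIV[of q T _ t] by (simp add: not_le less_Suc_eq_le)

lemma potential_nonneg:
  fixes q :: "nat \<Rightarrow> 'a::{finite,linorder}"
  assumes "card A = card B"
  shows "0 \<le> potential q T A B t"
  using excess_le_potential[where s=1 and q=q and T=T and A=A and B=B and t=t] assms
    ncount_1[of q T A t] ncount_1[of q T B t]
  by simp

text \<open>Threshold \<open>s + 1\<close> may exceed \<open>n\<close>; there both counts vanish and nonnegativity
  takes over.\<close>
lemma potential_Suc_le: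
  fixes q :: "nat \<Rightarrow> 'a::{finite,linorder}"
  assumes "t \<le> T" "q t \<in> A" "q t \<in> B" "card A = card B"
  shows "potential q T A B (t + 1) \<le> potential q T A B t"
proof (rule potential_leI)
  fix s assume s: "s \<in> {1..CARD('a)}"
  show "int (ncount q T A s (t + 1)) - int (ncount q T B s (t + 1)) \<le> potential q T A B t"
  proof (cases "s \<le> rank q T (q t) (t + 1)")
    case True
    then have "int (ncount q T A s (t + 1)) - int (ncount q T B s (t + 1))
        = int (ncount q T A (s + 1) t) - int (ncount q T B (s + 1) t)"
      using ncount_Suc[where q=q, OF assms(1,2)] ncount_Suc[where q=q, OF assms(1,3)] s by simp
    moreover have "int (ncount q T A (s + 1) t) - int (ncount q T B (s + 1) t) \<le> potential q T A B t"
    proof (cases "s + 1 \<le> CARD('a)")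
      case True
      then show ?thesis
        by (intro excess_le_potential) simp
    next
      case False
      then have "s + 1 = CARD('a) + 1"
        using s by simp
      then show ?thesis
        using potential_nonneg[OF assms(4), of q T t]
          ncount_beyond_card_UNIV[of q T A t] ncount_beyond_card_UNIV[of q T B t]
        by simp
    qed
    ultimately show ?thesis
      by simp
  next
    case False
    then show ?thesis
      using ncount_Suc[where q=q, OF assms(1,2)] ncount_Suc[where q=q, OF assms(1,3)] s excess_le_potential[OF s]
      by simp
  qed
qed

lemma ncount_le_ncount_card_Diff:
  assumes "card B = card B'"
  shows "ncount q T B s t \<le> ncount q T B' s t + card (B' - B)"
proof -
  have "{p \<in> B. s \<le> rank q T p t} \<subseteq> {p \<in> B'. s \<le> rank q T p t} \<union> (B - B')"
    by auto
  then have "ncount q T B s t \<le> card ({p \<in> B'. s \<le> rank q T p t} \<union> (B - B'))"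
    unfolding ncount_def by (simp add: card_mono)
  also have "\<dots> \<le> ncount q T B' s t + card (B - B')"
    unfolding ncount_def by (rule card_Un_le)
  also have "card (B - B') = card (B' - B)"
    using assms by (simp add: card_Diff_subset_Int Int_commute)
  finally show ?thesis .
qed

lemma potential_le_card_Diff:
  fixes q :: "nat \<Rightarrow> 'a::{finite,linorder}"
  assumes "card B = card B'"
  shows "potential q T A B' t \<le> potential q T A B t + int (card (B' - B))"
proof (rule potential_leI)
  fix s assume "s \<in> {1..CARD('a)}"
  then show "int (ncount q T A s t) - int (ncount q T B' s t)
      \<le> potential q T A B t + int (card (B' - B))"
    using excess_le_potential[where s=s and q=q and T=T and A=A and B=B and t=t]
      ncount_le_ncount_card_Diff[OF assms, of q T s t]
    by simp
qed

lemma potential_ge_1_if_miss: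
  fixes q :: "nat \<Rightarrow> 'a::{finite,linorder}"
  assumes "t \<le> T" "q t \<notin> A" "q t \<in> B" "card A = card B"
  shows "1 \<le> potential q T A B t"
proof -
  have "A \<noteq> {}"
    using assms(3,4) card_0_eq[of B] by auto
  then obtain p where "p \<in> A"
    by blast
  then have "card {p, q t} \<le> CARD('a)"
    using assms(2) card_mono[of UNIV "{p, q t}"] by simp
  then have two: "2 \<in> {1..CARD('a)}"
    using \<open>p \<in> A\<close> assms(2) by (cases "p = q t") auto
  have "\<forall>p\<in>A. 2 \<le> rank q T p t"
    using rank_other_ge_2[where q=q, OF assms(1)] assms(2) by metis
  then have "ncount q T A 2 t = card A"
    unfolding ncount_def by (metis (no_types, lifting) Collect_mem_eq Collect_cong)
  moreover have "{p \<in> B. 2 \<le> rank q T p t} \<subseteq> B - {q t}"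
    using rank_request[where q=q, OF assms(1)] by auto
  then have "ncount q T B 2 t \<le> card B - 1"
    unfolding ncount_def using assms(3) card_mono[of "B - {q t}"] by simp
  ultimately show ?thesis
    using excess_le_potential[OF two, where q=q and T=T and A=A and B=B and t=t] assms(3,4) card_0_eq[of B]
    by fastforce
qed

text \<open>Thresholds \<open>2..rank y\<close> lose the page \<open>y\<close>, larger ones see no page at all, and at
  \<open>s = 1\<close> the excess is \<open>0 \<le> \<Phi> - 1\<close> by \<open>potential_ge_1_if_miss\<close>.\<close>
lemma potential_evict_latest:
  fixes q :: "nat \<Rightarrow> 'a::{finite,linorder}"
  assumes "t \<le> T" "q t \<notin> A" "q t \<in> B" "card A = card B"
    and y: "y \<in> A" "\<forall>p\<in>A. rank q T p t \<le> rank q T y t"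
  shows "potential q T (insert (q t) (A - {y})) B t \<le> potential q T A B t - 1"
proof (rule potential_leI)
  define A' where "A' = insert (q t) (A - {y})"
  have pos: "1 \<le> potential q T A B t"
    using potential_ge_1_if_miss[where q=q, OF assms(1-4)] .
  fix s assume s: "s \<in> {1..CARD('a)}"
  show "int (ncount q T A' s t) - int (ncount q T B s t) \<le> potential q T A B t - 1"
  proof (cases "s = 1")
    case True
    have "card A' = card A"
      unfolding A'_def using y(1) assms(2) card_gt_0_iff[of A] by (auto simp: card_insert_if)
    then show ?thesis
      using True pos assms(4) ncount_1[of q T A' t] ncount_1[of q T B t] by simp
  next
    case False
    then have "2 \<le> s"
      using s by simp
    then have A'_s: "{p \<in> A'. s \<le> rank q T p t} = {p \<in> A - {y}. s \<le> rank q T p t}"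
      unfolding A'_def using rank_request[where q=q, OF assms(1)] by auto
    show ?thesis
    proof (cases "s \<le> rank q T y t")
      case True
      then have "{p \<in> A. s \<le> rank q T p t} = insert y {p \<in> A - {y}. s \<le> rank q T p t}"
        using y(1) by auto
      then have "ncount q T A s t = ncount q T A' s t + 1"
        unfolding ncount_def A'_s by simp
      then show ?thesis
        using excess_le_potential[OF s, where q=q and T=T and A=A and B=B and t=t] by simp
    next
      case False
      then have "{p \<in> A - {y}. s \<le> rank q T p t} = {}"
        using y(2) by force
      then have "ncount q T A' s t = 0"
        unfolding ncount_def A'_s by simp
      then show ?thesis
        using pos by simp
    qed
  qed
qed

lemma potential_FiF_step:
  fixes q :: "nat \<Rightarrow> 'a::{finite,linorder}"
  assumes "t \<le> T" "card A = card B" "card B' = card B" "q t \<in> B'"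
    and A': "A' = (if q t \<in> A then A
                 else insert (q t) (A - {ARG_MAX (\<lambda>p. rank q T p t) p. p \<in> A}))"
  shows "int (card (A' - A)) + potential q T A' B' (t + 1)
           \<le> potential q T A B t + int (card (B' - B))"
proof -
  have offline: "potential q T A B' t \<le> potential q T A B t + int (card (B' - B))"
    using potential_le_card_Diff assms(3) by metis
  show ?thesis
  proof (cases "q t \<in> A")
    case True
    then show ?thesis
      using A' offline potential_Suc_le[where q=q, OF assms(1) True assms(4)] assms(2,3) by simp
  next
    case False
    define y where "y = (ARG_MAX (\<lambda>p. rank q T p t) p. p \<in> A)"
    have "A \<noteq> {}"
      using assms(2-4) card_0_eq[of B'] by auto
    then obtain p0 where "p0 \<in> A"
      by blast
    then have y: "y \<in> A \<and> (\<forall>p. p \<in> A \<longrightarrow> rank q T p t \<le> rank q T y t)"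
      unfolding y_def
      by (rule arg_max_nat_lemma[where b="CARD('a) + 1"]) (simp add: rank_le_card_UNIV less_Suc_eq_le)
    have A'_eq: "A' = insert (q t) (A - {y})"
      using A' False unfolding y_def by simp
    then have "A' - A = {q t}" "card A' = card B'"
      using False y assms(2,3) \<open>A \<noteq> {}\<close> card_gt_0_iff[of A] by (auto simp: card_insert_if)
    moreover have "potential q T A' B' t \<le> potential q T A B' t - 1"
      unfolding A'_eq
      using potential_evict_latest[where q=q, OF assms(1) False assms(4)] y assms(2,3) by simp
    moreover have "potential q T A' B' (t + 1) \<le> potential q T A' B' t"
      using potential_Suc_le[where q=q, OF assms(1) _ assms(4)] A'_eq calculation(2) by simp
    ultimately show ?thesis
      using offline by simp
  qed
qed

lemma sum_le_telescoping:
  fixes a b f :: "nat \<Rightarrow> int"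
  assumes "\<forall>t\<in>{1..m}. a t + f (t + 1) - f t \<le> b t"
  shows "(\<Sum>t=1..m. a t) \<le> (\<Sum>t=1..m. b t) + f 1 - f (m + 1)"
  using assms
proof (induction m)
  case (Suc m)
  have "(\<Sum>t=1..m. a t) \<le> (\<Sum>t=1..m. b t) + f 1 - f (m + 1)"
    using Suc by simp
  moreover have "a (Suc m) + f (Suc m + 1) - f (Suc m) \<le> b (Suc m)"
    using Suc.prems by simp
  ultimately show ?case
    by simp
qed simp

lemma Phi_nonneg:
  assumes "is_FiF k q T C" "is_OFF k q T Cs" "t \<in> {1..T+1}"
  shows "0 \<le> Phi q T C Cs t"
  using assms unfolding is_FiF_def is_OFF_def Phi_eq_potential
  by (auto intro: potential_nonneg)

lemma Phi_amortized_step: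
  assumes "is_FiF k q T C" "is_OFF k q T Cs" "t \<in> {1..T}"
  shows "int (fetched C t) + Phi q T C Cs (t + 1) - Phi q T C Cs t \<le> int (fetched Cs t)"
proof -
  have "int (card (C (t + 1) - C t)) + potential q T (C (t + 1)) (Cs (t + 1)) (t + 1)
          \<le> potential q T (C t) (Cs t) t + int (card (Cs (t + 1) - Cs t))"
  proof (rule potential_FiF_step)
    show "card (C t) = card (Cs t)" "card (Cs (t + 1)) = card (Cs t)"
      using assms unfolding is_FiF_def is_OFF_def by auto
    show "t \<le> T" "q t \<in> Cs (t + 1)"
      using assms(2,3) unfolding is_OFF_def by auto
    show "C (t + 1) = (if q t \<in> C t then C t
        else insert (q t) (C t - {ARG_MAX (\<lambda>p. rank q T p t) p. p \<in> C t}))"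
      using assms(1,3) unfolding is_FiF_def by blast
  qed
  then show ?thesis
    unfolding fetched_def Phi_eq_potential by simp
qed

theorem mainTheorem11:
  fixes q :: "nat \<Rightarrow> 'a::{finite,linorder}"
    and T k :: nat
    and C Cs :: "nat \<Rightarrow> 'a set"
  assumes "k < CARD('a)"
    and "is_FiF k q T C"
    and "is_OFF k q T Cs"
    and "\<forall>t\<in>{1..T}. fetched Cs t \<le> 1"
  shows "(\<forall>t\<in>{1..T}. int (fetched C t) + Phi q T C Cs (t + 1) - Phi q T C Cs t
                        \<le> int (fetched Cs t))
       \<and> (\<forall>t\<in>{1..T+1}. Phi q T C Cs t \<ge> 0)
       \<and> int (\<Sum>t=1..T. fetched C t) \<le> int (\<Sum>t=1..T. fetched Cs t) + Phi q T C Cs 1"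
proof -
  have step: "\<forall>t\<in>{1..T}. int (fetched C t) + Phi q T C Cs (t + 1) - Phi q T C Cs t
                 \<le> int (fetched Cs t)"
    using Phi_amortized_step[OF assms(2,3)] by blast
  have nonneg: "\<forall>t\<in>{1..T+1}. Phi q T C Cs t \<ge> 0"
    using Phi_nonneg[OF assms(2,3)] by blast
  have "int (\<Sum>t=1..T. fetched C t) \<le> int (\<Sum>t=1..T. fetched Cs t) + Phi q T C Cs 1"
    using sum_le_telescoping[OF step] nonneg[rule_format, of "T + 1"] by simp
  then show ?thesis
    using step nonneg by blast
qed

end
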